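(* For $\varepsilon\in(0,1)$ and integers $j\ge 1$ define \[ A_{j,\varepsilon}= \begin{cases} \dfrac{2(-1)^{(j-1)/2}}{(j-2)\bigl(\frac{1}{2}(j-3)\bigr)!\sqrt{\pi}}, & \text{if } j\ge 3 \text{ and } j \text{ is odd},\\[1ex] \varepsilon, & \text{otherwise}. \end{cases} \] Then for every real $x$, \[ \int_{0}^{x} \exp\bigl(-\xi^{2}\operatorname{erf}(\xi)\bigr)\,d\xi =\sum_{n=0}^{\infty} \lim_{\varepsilon\to 0} \left( \sum_{\substack{k_{1}+2k_{2}+\cdots+nk_{n}=n\\ k_{1},k_{2},\dots,k_{n}\ge 0}} \prod_{j=1}^{n} \frac{A_{j,\varepsilon}^{\,k_{j}}}{k_{j}!} \right)\frac{x^{n+1}}{n+1}, \] where the inner sum runs over all tuples of nonnegative integers $(k_1,\dots,k_n)$ with $\sum_{j=1}^n jk_j=n$ (for $n=0$ the inner sum is the empty product, equal to $1$).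
   Context: $\operatorname{erf}(x)=\frac{2}{\sqrt{\pi}}\int_0^x e^{-s^2}\,ds$ is the Gauss error function. *)

theory Defs
  imports "HOL-Analysis.Analysis"
begin

definition oint :: "real \<Rightarrow> real \<Rightarrow> (real \<Rightarrow> real) \<Rightarrow> real" where
  "oint a b f = (if a \<le> b then integral {a..b} f else - integral {b..a} f)"

definition erf :: "real \<Rightarrow> real" where
  "erf x = 2 / sqrt pi * oint 0 x (\<lambda>s. exp (- (s^2)))"

definition A :: "nat \<Rightarrow> real \<Rightarrow> real" where
  "A j \<epsilon> = (if j \<ge> 3 \<and> odd j
      then 2 * (-1) ^ ((j - 1) div 2) / ((real j - 2) * fact ((j - 3) div 2) * sqrt pi)
      else \<epsilon>)"

definition tuples :: "nat \<Rightarrow> (nat \<Rightarrow> nat) set" where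
  "tuples n = {k. (\<forall>j. j \<notin> {1..n} \<longrightarrow> k j = 0) \<and> (\<Sum>j=1..n. j * k j) = n}"

definition inner_sum :: "nat \<Rightarrow> real \<Rightarrow> real" where
  "inner_sum n \<epsilon> = (\<Sum>k\<in>tuples n. \<Prod>j=1..n. A j \<epsilon> ^ k j / fact (k j))"

end

theory Submission
  imports Defs
begin

text \<open>Write a_j = A_{j,0}. The inner sum is a polynomial in \<epsilon>, so its limit is its value
  c_n at \<epsilon> = 0; expanding exp (\<Sum>_j a_j x^j) = \<Prod>_j \<Sum>_k (a_j x^j)^k / k! shows that c_n
  is the n-th Taylor coefficient of exp (g) for g(x) = \<Sum>_j a_j x^j, and termwise integration
  of e^{-s^2} shows g(x) = -x^2 erf x. Instead of composing power series we characterise c_n by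
  the recurrence n c_n = \<Sum>_j j a_j c_{n-j}, obtained by removing one part from each tuple.
  It yields a bound |c_n| R^n \<le> B for every R, so P(x) = \<Sum>_n c_n x^n is entire, and it is the
  coefficientwise form of P' = g' P, whence P = exp g. Integrating P termwise gives the claim.\<close>

definition tuple_weight :: "(nat \<Rightarrow> 'a::field_char_0) \<Rightarrow> nat \<Rightarrow> (nat \<Rightarrow> nat) \<Rightarrow> 'a" where
  "tuple_weight a N k = (\<Prod>j=1..N. a j ^ k j / fact (k j))"

definition exp_coeff :: "(nat \<Rightarrow> 'a::field_char_0) \<Rightarrow> nat \<Rightarrow> 'a" where
  "exp_coeff a n = (\<Sum>k\<in>tuples n. tuple_weight a n k)"

lemma tuples_iff:
  assumes "n \<le> N"
  shows "k \<in> tuples n \<longleftrightarrow> (\<forall>i. i \<notin> {1..N} \<longrightarrow> k i = 0) \<and> (\<Sum>i=1..N. i * k i) = n"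
proof
  assume "k \<in> tuples n"
  then have supp: "\<forall>i. i \<notin> {1..n} \<longrightarrow> k i = 0" and weighted: "(\<Sum>i=1..n. i * k i) = n"
    by (simp_all add: tuples_def)
  have sub: "{1..n} \<subseteq> {1..N}"
    using assms by simp
  have "(\<Sum>i=1..N. i * k i) = (\<Sum>i=1..n. i * k i)"
    by (rule sum.mono_neutral_right) (use supp sub in auto)
  moreover have "\<forall>i. i \<notin> {1..N} \<longrightarrow> k i = 0"
    using supp sub by (metis subsetD)
  ultimately show "(\<forall>i. i \<notin> {1..N} \<longrightarrow> k i = 0) \<and> (\<Sum>i=1..N. i * k i) = n"
    using weighted by simp
next
  assume "(\<forall>i. i \<notin> {1..N} \<longrightarrow> k i = 0) \<and> (\<Sum>i=1..N. i * k i) = n"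
  then have supp: "\<And>i. i \<notin> {1..N} \<Longrightarrow> k i = 0" and weighted: "(\<Sum>i=1..N. i * k i) = n"
    by simp_all
  have supp_n: "k i = 0" if "i \<notin> {1..n}" for i
  proof (rule ccontr)
    assume "k i \<noteq> 0"
    then have "i \<in> {1..N}"
      using supp by metis
    have "i \<le> i * k i"
      using \<open>k i \<noteq> 0\<close> by simp
    also have "\<dots> \<le> (\<Sum>i=1..N. i * k i)"
      by (rule member_le_sum) (use \<open>i \<in> {1..N}\<close> in simp_all)
    finally have "i \<le> n"
      using weighted by simp
    with that \<open>i \<in> {1..N}\<close> show False
      by simp
  qed
  have "(\<Sum>i=1..n. i * k i) = (\<Sum>i=1..N. i * k i)"
    by (rule sum.mono_neutral_left) (use supp_n assms in auto)
  with weighted supp_n show "k \<in> tuples n"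
    by (simp add: tuples_def)
qed

lemma finite_tuples: "finite (tuples n)"
proof (rule finite_subset)
  show "tuples n \<subseteq> {k. \<forall>i. (i \<in> {1..n} \<longrightarrow> k i \<in> {0..n}) \<and> (i \<notin> {1..n} \<longrightarrow> k i = 0)}"
  proof safe
    fix k i assume k: "k \<in> tuples n" and i: "i \<in> {1..n}"
    have "k i \<le> i * k i"
      using i by simp
    also have "\<dots> \<le> (\<Sum>j=1..n. j * k j)"
      by (rule member_le_sum) (use i in simp_all)
    also have "\<dots> = n"
      using k by (simp add: tuples_def)
    finally show "k i \<in> {0..n}"
      by simp
  qed (auto simp: tuples_def)
  show "finite {k. \<forall>i. (i \<in> {1..n} \<longrightarrow> k i \<in> {0..n}) \<and> (i \<notin> {1..n} \<longrightarrow> k i = (0::nat))}"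
    by (rule finite_set_of_finite_funs) auto
qed

lemma exp_coeff_0 [simp]: "exp_coeff a 0 = 1"
proof -
  have "tuples 0 = {\<lambda>_. 0}"
    by (auto simp: tuples_def)
  then show ?thesis
    by (simp add: exp_coeff_def tuple_weight_def)
qed

lemma tuple_weight_mono_neutral:
  assumes "\<And>i. i > n \<Longrightarrow> k i = 0" "n \<le> N"
  shows "tuple_weight a N k = tuple_weight a n k"
  unfolding tuple_weight_def by (rule prod.mono_neutral_right) (use assms in auto)

lemma tuple_weight_incr:
  assumes "j \<in> {1..N}"
  shows "of_nat (Suc (k j)) * tuple_weight a N (k(j := Suc (k j))) = a j * tuple_weight a N k"
proof -
  define rest where "rest = (\<Prod>i\<in>{1..N}-{j}. a i ^ k i / fact (k i))"
  have "tuple_weight a N k = a j ^ k j / fact (k j) * rest"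
    unfolding tuple_weight_def rest_def by (rule prod.remove) (use assms in auto)
  moreover have "tuple_weight a N (k(j := Suc (k j))) = a j ^ Suc (k j) / fact (Suc (k j)) * rest"
    unfolding tuple_weight_def rest_def
    by (subst prod.remove[of _ j]) (use assms in \<open>auto intro!: prod.cong\<close>)
  moreover have "of_nat (Suc (k j)) * (a j ^ Suc (k j) / fact (Suc (k j))) = a j * (a j ^ k j / fact (k j))"
    by (simp add: fact_Suc field_simps del: of_nat_Suc)
  ultimately show ?thesis
    by (metis mult.assoc)
qed

lemma sum_weighted_incr:
  fixes k :: "nat \<Rightarrow> nat"
  assumes "j \<in> {1..N}"
  shows "(\<Sum>i=1..N. i * (k(j := Suc (k j))) i) = (\<Sum>i=1..N. i * k i) + j"
proof -
  have "(\<Sum>i=1..N. i * (k(j := Suc (k j))) i) = j * Suc (k j) + (\<Sum>i\<in>{1..N}-{j}. i * k i)"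
    by (subst sum.remove[of _ j]) (use assms in \<open>auto intro!: sum.cong\<close>)
  also have "\<dots> = (\<Sum>i=1..N. i * k i) + j"
    by (subst (2) sum.remove[of _ j]) (use assms in auto)
  finally show ?thesis .
qed

text \<open>Lowering k_j by one maps the tuples of m with k_j \<noteq> 0 bijectively onto the tuples of m - j.\<close>
lemma sum_tuples_times_entry:
  assumes j: "j \<in> {1..m}"
  shows "(\<Sum>k\<in>tuples m. of_nat (k j) * tuple_weight a m k) = a j * exp_coeff a (m - j)"
proof -
  define S where "S = {k \<in> tuples m. k j \<noteq> 0}"
  have "(\<Sum>k\<in>tuples m. of_nat (k j) * tuple_weight a m k) = (\<Sum>k\<in>S. of_nat (k j) * tuple_weight a m k)"
    unfolding S_def by (rule sum.mono_neutral_right) (auto simp: finite_tuples)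
  also have "\<dots> = (\<Sum>k\<in>tuples (m - j). a j * tuple_weight a m k)"
  proof (rule sum.reindex_bij_witness[where i = "\<lambda>k. k(j := Suc (k j))" and j = "\<lambda>k. k(j := k j - 1)"])
    fix k assume "k \<in> S"
    then have k: "k \<in> tuples m" "k j \<noteq> 0" by (auto simp: S_def)
    then show "(k(j := k j - 1))(j := Suc ((k(j := k j - 1)) j)) = k" by auto
    have "(\<Sum>i=1..m. i * (k(j := k j - 1)) i) + j = m"
      using sum_weighted_incr[OF j, of "k(j := k j - 1)"] k by (simp add: tuples_iff[of m m])
    then show "k(j := k j - 1) \<in> tuples (m - j)"
      using k by (auto simp: tuples_iff[of "m - j" m] tuples_iff[of m m])
    show "a j * tuple_weight a m (k(j := k j - 1)) = of_nat (k j) * tuple_weight a m k"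
      using tuple_weight_incr[OF j, of "k(j := k j - 1)" a] k by simp
  next
    fix k assume k: "k \<in> tuples (m - j)"
    then show "(k(j := Suc (k j)))(j := (k(j := Suc (k j))) j - 1) = k" by auto
    show "k(j := Suc (k j)) \<in> S"
      using k j sum_weighted_incr[OF j, of k] by (auto simp: S_def tuples_iff[of _ m])
  qed
  also have "\<dots> = (\<Sum>k\<in>tuples (m - j). a j * tuple_weight a (m - j) k)"
    by (intro sum.cong refl arg_cong[where f = "(*) (a j)"] tuple_weight_mono_neutral)
       (auto simp: tuples_def)
  also have "\<dots> = a j * exp_coeff a (m - j)"
    by (simp add: exp_coeff_def sum_distrib_left)
  finally show ?thesis .
qed

lemma exp_coeff_recurrence:
  "of_nat m * exp_coeff a m = (\<Sum>j=1..m. of_nat j * a j * exp_coeff a (m - j))"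
proof -
  have "of_nat m * exp_coeff a m = (\<Sum>k\<in>tuples m. \<Sum>j=1..m. of_nat j * (of_nat (k j) * tuple_weight a m k))"
    unfolding exp_coeff_def sum_distrib_left
  proof (rule sum.cong[OF refl])
    fix k assume "k \<in> tuples m"
    then have "(of_nat m :: 'a) = (\<Sum>j=1..m. of_nat j * of_nat (k j))"
      by (simp add: tuples_def flip: of_nat_mult of_nat_sum)
    then show "of_nat m * tuple_weight a m k = (\<Sum>j=1..m. of_nat j * (of_nat (k j) * tuple_weight a m k))"
      by (simp add: sum_distrib_right mult.assoc)
  qed
  also have "\<dots> = (\<Sum>j=1..m. of_nat j * (\<Sum>k\<in>tuples m. of_nat (k j) * tuple_weight a m k))"
    by (subst sum.swap) (simp add: sum_distrib_left)
  also have "\<dots> = (\<Sum>j=1..m. of_nat j * a j * exp_coeff a (m - j))"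
    by (intro sum.cong refl) (simp add: sum_tuples_times_entry mult.assoc)
  finally show ?thesis .
qed

lemma oint_eq_of_deriv:
  assumes "\<And>x. (F has_real_derivative f x) (at x)"
  shows "oint a b f = F b - F a"
proof -
  have deriv: "(F has_vector_derivative f x) (at x within S)" for x S
    using assms by (simp add: has_real_derivative_iff_has_vector_derivative[symmetric] has_field_derivative_at_within)
  show ?thesis
  proof (cases "a \<le> b")
    case True
    then have "(f has_integral (F b - F a)) {a..b}"
      by (intro fundamental_theorem_of_calculus deriv)
    with True show ?thesis
      by (simp add: oint_def integral_unique)
  next
    case False
    then have "(f has_integral (F a - F b)) {b..a}"
      by (intro fundamental_theorem_of_calculus deriv) simp
    with False show ?thesis
      by (simp add: oint_def integral_unique)
  qed
qed

lemma powser_integral_sums: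
  fixes c :: "nat \<Rightarrow> real"
  assumes summable: "\<And>y. summable (\<lambda>n. c n * y^n)"
  shows "(\<lambda>n. c n * x^(n+1) / real (n+1)) sums oint 0 x (\<lambda>y. \<Sum>n. c n * y^n)"
proof -
  define d where "d m = (if m = 0 then 0 else c (m - 1) / real m)" for m
  have diffs_d: "diffs d = c"
    by (simp add: fun_eq_iff diffs_def d_def)
  have summable_d: "summable (\<lambda>m. d m * y^m)" for y
  proof -
    have "summable (\<lambda>n. norm (c n * y^n))"
      by (rule powser_insidea[OF summable[of "\<bar>y\<bar> + 1"]]) simp
    then have "summable (\<lambda>n. d (Suc n) * y^(Suc n))"
    proof (rule summable_comparison_test'[OF summable_mult[of _ "\<bar>y\<bar>"]])
      fix n
      have "norm (d (Suc n) * y^(Suc n)) = \<bar>y\<bar> * norm (c n * y^n) / real (Suc n)"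
        by (simp add: d_def abs_mult power_abs mult_ac)
      also have "\<dots> \<le> \<bar>y\<bar> * norm (c n * y^n) / 1"
        by (rule divide_left_mono) auto
      finally show "norm (d (Suc n) * y^(Suc n)) \<le> \<bar>y\<bar> * norm (c n * y^n)"
        by simp
    qed
    then show ?thesis
      using summable_Suc_iff[of "\<lambda>m. d m * y^m"] by simp
  qed
  have "oint 0 x (\<lambda>y. \<Sum>n. c n * y^n) = (\<Sum>m. d m * x^m) - (\<Sum>m. d m * 0^m)"
    using termdiffs_strong_converges_everywhere[OF summable_d]
    by (intro oint_eq_of_deriv) (simp add: diffs_d)
  also have "\<dots> = (\<Sum>m. d m * x^m)"
    by (simp add: d_def)
  finally have "(\<lambda>m. d m * x^m) sums oint 0 x (\<lambda>y. \<Sum>n. c n * y^n)"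
    using summable_d by (simp add: summable_sums)
  then have "(\<lambda>n. d (Suc n) * x^(Suc n)) sums oint 0 x (\<lambda>y. \<Sum>n. c n * y^n)"
    by (subst sums_Suc_iff) (simp add: d_def)
  then show ?thesis
    by (simp add: d_def)
qed

text \<open>Strong induction: beyond n > \<Sum>j. \<alpha> j the recurrence bounds d n by the maximum of its
  predecessors.\<close>
lemma bounded_of_convolution_recurrence:
  fixes \<alpha> d :: "nat \<Rightarrow> real"
  assumes \<alpha>_nonneg: "\<And>j. 0 \<le> \<alpha> j" and "summable \<alpha>" and d_nonneg: "\<And>n. 0 \<le> d n"
    and rec: "\<And>n. real n * d n \<le> (\<Sum>j=1..n. \<alpha> j * d (n - j))"
  obtains B where "\<And>n. d n \<le> B"
proof -
  define S where "S = suminf \<alpha>"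
  define N where "N = nat \<lceil>S\<rceil>"
  define B where "B = Max (d ` {..N})"
  have partial: "(\<Sum>j=1..n. \<alpha> j) \<le> S" for n
    unfolding S_def by (rule sum_le_suminf) (use assms in auto)
  have "d 0 \<le> B"
    unfolding B_def by (intro Max_ge) auto
  with d_nonneg[of 0] have B_nonneg: "0 \<le> B"
    by linarith
  have "d n \<le> B" for n
  proof (induction n rule: less_induct)
    case (less n)
    show ?case
    proof (cases "n \<le> N")
      case True
      then show ?thesis
        unfolding B_def by (intro Max_ge) auto
    next
      case False
      then have "S < real n"
        unfolding N_def by linarith
      have "real n * d n \<le> (\<Sum>j=1..n. \<alpha> j * d (n - j))"
        by (rule rec)
      also have "\<dots> \<le> (\<Sum>j=1..n. \<alpha> j * B)"
        by (intro sum_mono mult_left_mono less.IH \<alpha>_nonneg) auto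
      also have "\<dots> \<le> S * B"
        by (simp only: sum_distrib_right[symmetric]) (intro mult_right_mono partial B_nonneg)
      also have "\<dots> \<le> real n * B"
        using \<open>S < real n\<close> B_nonneg by (intro mult_right_mono) auto
      finally show ?thesis
        using False by simp
    qed
  qed
  then show ?thesis
    by (rule that)
qed

lemma summable_real_times_abs_powser:
  fixes a :: "nat \<Rightarrow> real"
  assumes summable_a: "\<And>y. summable (\<lambda>n. a n * y^n)" and "0 \<le> R"
  shows "summable (\<lambda>j. real j * \<bar>a j\<bar> * R^j)"
proof -
  have "summable (\<lambda>n. norm (diffs a n * R^n))"
    by (rule powser_insidea[OF termdiff_converges_all[OF summable_a, of "R + 1"]])
       (use \<open>0 \<le> R\<close> in simp)
  then have "summable (\<lambda>n. real (Suc n) * \<bar>a (Suc n)\<bar> * R^(Suc n))"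
    using summable_mult[of _ R] \<open>0 \<le> R\<close> by (simp add: diffs_def abs_mult mult_ac)
  then show ?thesis
    by (rule summable_Suc_iff[THEN iffD1])
qed

lemma summable_powser_of_recurrence:
  fixes a c :: "nat \<Rightarrow> real"
  assumes rec: "\<And>m. real m * c m = (\<Sum>j=1..m. real j * a j * c (m - j))"
    and summable_a: "\<And>y. summable (\<lambda>n. a n * y^n)"
  shows "summable (\<lambda>n. c n * y^n)"
proof -
  define R where "R = \<bar>y\<bar> + 1"
  define \<alpha> where "\<alpha> j = real j * \<bar>a j\<bar> * R^j" for j
  define d where "d n = \<bar>c n\<bar> * R^n" for n
  have "R > 0"
    by (simp add: R_def add_nonneg_pos)
  have "summable \<alpha>"
    unfolding \<alpha>_def by (rule summable_real_times_abs_powser[OF summable_a]) (use \<open>R > 0\<close> in simp)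
  moreover have "real n * d n \<le> (\<Sum>j=1..n. \<alpha> j * d (n - j))" for n
  proof -
    have "real n * d n = \<bar>real n * c n\<bar> * R^n"
      by (simp add: d_def abs_mult)
    also have "\<dots> = \<bar>\<Sum>j=1..n. real j * a j * c (n - j)\<bar> * R^n"
      by (simp only: rec)
    also have "\<dots> \<le> (\<Sum>j=1..n. \<bar>real j * a j * c (n - j)\<bar> * R^n)"
      unfolding sum_distrib_right[symmetric] by (rule mult_right_mono) (use \<open>R > 0\<close> in auto)
    also have "\<dots> = (\<Sum>j=1..n. \<alpha> j * d (n - j))"
    proof (intro sum.cong refl)
      fix j assume "j \<in> {1..n}"
      then have "R^n = R^j * R^(n - j)"
        by (simp flip: power_add)
      then show "\<bar>real j * a j * c (n - j)\<bar> * R^n = \<alpha> j * d (n - j)"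
        by (simp add: \<alpha>_def d_def abs_mult)
    qed
    finally show ?thesis .
  qed
  moreover have "0 \<le> \<alpha> j" "0 \<le> d n" for j n
    using \<open>R > 0\<close> by (simp_all add: \<alpha>_def d_def)
  ultimately obtain B where B: "\<And>n. d n \<le> B"
    by (metis bounded_of_convolution_recurrence)
  have "summable (\<lambda>n. norm (c n) * \<bar>y\<bar>^n)"
    by (rule Abel_lemma[of _ R _ B]) (use B in \<open>auto simp: d_def R_def\<close>)
  then have "summable (\<lambda>n. norm (c n * y^n))"
    by (simp add: abs_mult power_abs)
  then show ?thesis
    by (rule summable_norm_cancel)
qed

lemma diffs_of_recurrence:
  fixes a c :: "nat \<Rightarrow> real"
  assumes rec: "\<And>m. real m * c m = (\<Sum>j=1..m. real j * a j * c (m - j))"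
  shows "diffs c k = (\<Sum>i\<le>k. diffs a i * c (k - i))"
proof -
  have "diffs c k = (\<Sum>j=Suc 0..Suc k. real j * a j * c (Suc k - j))"
    using rec[of "Suc k"] by (simp add: diffs_def)
  also have "\<dots> = (\<Sum>i=0..k. real (Suc i) * a (Suc i) * c (k - i))"
    by (subst sum.shift_bounds_cl_Suc_ivl) simp
  finally show ?thesis
    by (simp add: diffs_def atLeast0AtMost)
qed

lemma powser_deriv_of_recurrence:
  fixes a c :: "nat \<Rightarrow> real"
  assumes rec: "\<And>m. real m * c m = (\<Sum>j=1..m. real j * a j * c (m - j))"
    and summable_a: "\<And>y. summable (\<lambda>n. a n * y^n)"
  shows "(\<Sum>n. diffs c n * y^n) = (\<Sum>n. diffs a n * y^n) * (\<Sum>n. c n * y^n)"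
proof -
  have abs_summable: "summable (\<lambda>n. norm (f n * y^n))"
    if "\<And>y. summable (\<lambda>n. f n * y^n)" for f :: "nat \<Rightarrow> real"
    by (rule powser_insidea[OF that[of "\<bar>y\<bar> + 1"]]) simp
  have "(\<Sum>n. diffs a n * y^n) * (\<Sum>n. c n * y^n)
      = (\<Sum>k. \<Sum>i\<le>k. (diffs a i * y^i) * (c (k - i) * y^(k - i)))"
    by (rule Cauchy_product[OF abs_summable abs_summable])
       (use summable_powser_of_recurrence[OF rec summable_a] termdiff_converges_all[OF summable_a] in auto)
  also have "\<dots> = (\<Sum>k. diffs c k * y^k)"
  proof (rule suminf_cong)
    fix k
    have "(\<Sum>i\<le>k. (diffs a i * y^i) * (c (k - i) * y^(k - i))) = (\<Sum>i\<le>k. diffs a i * c (k - i) * y^k)"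
    proof (rule sum.cong[OF refl])
      fix i assume "i \<in> {..k}"
      then have "y^i * y^(k - i) = y^k"
        by (simp flip: power_add)
      then show "(diffs a i * y^i) * (c (k - i) * y^(k - i)) = diffs a i * c (k - i) * y^k"
        by (metis mult.assoc mult.left_commute)
    qed
    then show "(\<Sum>i\<le>k. (diffs a i * y^i) * (c (k - i) * y^(k - i))) = diffs c k * y^k"
      by (simp add: diffs_of_recurrence[OF rec] sum_distrib_right)
  qed
  finally show ?thesis ..
qed

lemma powser_sums_exp_of_recurrence:
  fixes a c :: "nat \<Rightarrow> real"
  assumes rec: "\<And>m. real m * c m = (\<Sum>j=1..m. real j * a j * c (m - j))"
    and summable_a: "\<And>y. summable (\<lambda>n. a n * y^n)" and "a 0 = 0"
  shows "(\<lambda>n. c n * y^n) sums (c 0 * exp (\<Sum>n. a n * y^n))"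
proof -
  define P where "P y = (\<Sum>n. c n * y^n)" for y
  define G where "G y = (\<Sum>n. a n * y^n)" for y
  define G' where "G' y = (\<Sum>n. diffs a n * y^n)" for y
  have summable_c: "summable (\<lambda>n. c n * y^n)" for y
    by (rule summable_powser_of_recurrence[OF rec summable_a])
  have dG: "(G has_real_derivative G' y) (at y)" for y
    unfolding G_def G'_def by (rule termdiffs_strong_converges_everywhere[OF summable_a])
  have dP: "(P has_real_derivative G' y * P y) (at y)" for y
    using termdiffs_strong_converges_everywhere[OF summable_c]
    unfolding P_def G'_def powser_deriv_of_recurrence[OF rec summable_a] .
  have "\<forall>y. DERIV (\<lambda>y. P y * exp (- G y)) y :> 0"
    using DERIV_mult[OF dP DERIV_chain2[OF DERIV_exp DERIV_minus[OF dG]]]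
    by (simp add: algebra_simps)
  then have "P y * exp (- G y) = P 0 * exp (- G 0)"
    by (rule DERIV_isconst_all[OF _])
  also have "\<dots> = c 0"
    by (simp add: P_def G_def \<open>a 0 = 0\<close>)
  finally have "P y = c 0 * exp (G y)"
    by (simp add: exp_minus field_simps)
  then show ?thesis
    using summable_sums[OF summable_c[of y]] by (simp add: P_def G_def)
qed

definition gauss_coeff :: "nat \<Rightarrow> real" where
  "gauss_coeff n = (if even n then (-1) ^ (n div 2) / fact (n div 2) else 0)"

lemma gauss_coeff_sums: "(\<lambda>n. gauss_coeff n * y^n) sums exp (- (y^2))"
proof -
  have "(\<lambda>m. (- (y^2))^m /\<^sub>R fact m) sums exp (- (y^2))"
    by (rule exp_converges)
  moreover have "(- (y^2))^m /\<^sub>R fact m = gauss_coeff (2 * m) * y^(2 * m)" for m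
  proof -
    have "(- (y^2))^m = (-1)^m * y^(2 * m)"
      unfolding power_mult by (rule power_minus)
    then show ?thesis
      by (simp add: gauss_coeff_def divide_inverse mult_ac)
  qed
  ultimately have "(\<lambda>m. gauss_coeff (2 * m) * y^(2 * m)) sums exp (- (y^2))"
    by simp
  then show ?thesis
    by (subst (asm) sums_mono_reindex[of "\<lambda>m. 2 * m"])
       (auto simp: gauss_coeff_def strict_mono_def elim!: evenE)
qed

lemma erf_sums: "(\<lambda>n. 2 / sqrt pi * (gauss_coeff n * x^(n+1) / real (n+1))) sums erf x"
proof -
  have "(\<lambda>y. \<Sum>n. gauss_coeff n * y^n) = (\<lambda>y. exp (- (y^2)))"
    using gauss_coeff_sums by (simp add: sums_iff)
  moreover have "(\<lambda>n. gauss_coeff n * x^(n+1) / real (n+1)) sums oint 0 x (\<lambda>y. \<Sum>n. gauss_coeff n * y^n)"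
    by (rule powser_integral_sums) (use gauss_coeff_sums in \<open>rule sums_summable\<close>)
  ultimately have "(\<lambda>n. gauss_coeff n * x^(n+1) / real (n+1)) sums oint 0 x (\<lambda>y. exp (- (y^2)))"
    by simp
  from sums_mult[OF this, of "2 / sqrt pi"] show ?thesis
    by (simp only: erf_def)
qed

lemma A_0_powser_sums: "(\<lambda>j. A j 0 * y^j) sums - (y^2 * erf y)"
proof -
  have A_shift: "A (n + 3) 0 = - (2 / sqrt pi) * (gauss_coeff n / real (n + 1))" for n
  proof (cases "even n")
    case True
    then obtain t where n: "n = 2 * t"
      by blast
    then have "A (n + 3) 0 = 2 * (-1) ^ (t + 1) / ((2 * real t + 1) * fact t * sqrt pi)"
      by (simp add: A_def)
    also have "\<dots> = - (2 / sqrt pi) * (gauss_coeff n / real (n + 1))"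
      using n by (simp add: gauss_coeff_def field_simps)
    finally show ?thesis .
  next
    case False
    then show ?thesis
      by (simp add: A_def gauss_coeff_def)
  qed
  have "A (n + 3) 0 * y^(n + 3) = - (y^2) * (2 / sqrt pi * (gauss_coeff n * y^(n+1) / real (n+1)))" for n
    by (simp only: A_shift) (simp add: power_add power2_eq_square power3_eq_cube field_simps mult_ac)
  then have "(\<lambda>n. A (n + 3) 0 * y^(n + 3)) sums - (y^2 * erf y)"
    using sums_mult[OF erf_sums, of "- (y^2)" y] by simp
  then show ?thesis
    by (subst (asm) sums_zero_iff_shift) (auto simp: A_def)
qed

lemma tendsto_A: "(A j \<longlongrightarrow> A j \<epsilon>) (at \<epsilon> within S)"
proof (cases "3 \<le> j \<and> odd j")
  case True
  have "A j = (\<lambda>_. A j \<epsilon>)"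
    by (intro ext) (simp only: A_def if_P[OF True])
  then show ?thesis
    by (subst (1) \<open>A j = (\<lambda>_. A j \<epsilon>)\<close>) (rule tendsto_const)
next
  case False
  have "A j = (\<lambda>\<epsilon>. \<epsilon>)"
    by (intro ext) (simp only: A_def if_not_P[OF False])
  then show ?thesis
    by simp
qed

theorem lemma2:
  fixes x :: real
  shows "(\<lambda>n. Lim (at_right 0) (\<lambda>\<epsilon>. inner_sum n \<epsilon>) * x ^ (n + 1) / real (n + 1))
           sums (oint 0 x (\<lambda>\<xi>. exp (- (\<xi>^2 * erf \<xi>))))"
proof -
  let ?a = "\<lambda>j. A j 0"
  have "((\<lambda>\<epsilon>. inner_sum n \<epsilon>) \<longlongrightarrow> exp_coeff ?a n) (at_right 0)" for n
    unfolding inner_sum_def exp_coeff_def tuple_weight_def by (intro tendsto_intros tendsto_A) auto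
  then have lim: "Lim (at_right 0) (\<lambda>\<epsilon>. inner_sum n \<epsilon>) = exp_coeff ?a n" for n
    by (intro tendsto_Lim) simp_all
  have "(\<lambda>n. exp_coeff ?a n * y^n) sums exp (- (y^2 * erf y))" for y
    using powser_sums_exp_of_recurrence[OF exp_coeff_recurrence sums_summable[OF A_0_powser_sums]]
      A_0_powser_sums by (simp add: A_def sums_iff)
  then have "(\<lambda>y. \<Sum>n. exp_coeff ?a n * y^n) = (\<lambda>\<xi>. exp (- (\<xi>^2 * erf \<xi>)))"
    and "\<And>y. summable (\<lambda>n. exp_coeff ?a n * y^n)"
    by (simp_all add: sums_iff)
  then show ?thesis
    using powser_integral_sums[of "exp_coeff ?a" x] by (simp add: lim)
qed

end
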